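(* (i) If $\mathcal{U}$ is a subspace of $\mathbb{R}^n$ with $\mu(\mathcal{U})<1/2$, then $\mathcal{U}$ is realizable. (ii) For every $\alpha\in(1/2,1]$ there is a subspace $\mathcal{U}$ (of some $\mathbb{R}^n$) with $\mu(\mathcal{U})=\alpha$ that is not realizable.
   Context: For a subspace $\mathcal{U}\subseteq\mathbb{R}^n$, $P_{\mathcal{U}}$ denotes the orthogonal projector onto $\mathcal{U}$ and the coherence of $\mathcal{U}$ is $\mu(\mathcal{U})=\max_{i\in\{1,\dots,n\}}\|P_{\mathcal{U}}e_i\|_2^2$, where $e_i$ is the $i$-th standard basis vector. A correlation matrix is a positive semidefinite matrix with all diagonal entries equal to $1$; $\mathcal{U}$ is realizable if there is an $n\times n$ correlation matrix whose nullspace contains $\mathcal{U}$. *)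

theory Defs
  imports Complex_Main "Jordan_Normal_Form.Matrix"
begin

definition is_subspace :: "nat \<Rightarrow> real vec set \<Rightarrow> bool" where
  "is_subspace n U \<longleftrightarrow> U \<subseteq> carrier_vec n \<and> 0\<^sub>v n \<in> U \<and>
     (\<forall>u\<in>U. \<forall>v\<in>U. u + v \<in> U) \<and> (\<forall>c::real. \<forall>u\<in>U. c \<cdot>\<^sub>v u \<in> U)"

definition orth_proj :: "real vec set \<Rightarrow> real vec \<Rightarrow> real vec" where
  "orth_proj U x = (THE p. p \<in> U \<and> (\<forall>u\<in>U. (x - p) \<bullet> u = 0))"

definition sq_norm_vec :: "real vec \<Rightarrow> real" where
  "sq_norm_vec x = x \<bullet> x"

definition coherence :: "nat \<Rightarrow> real vec set \<Rightarrow> real" where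
  "coherence n U = Max ((\<lambda>i. sq_norm_vec (orth_proj U (unit_vec n i))) ` {..<n})"

definition psd_mat :: "nat \<Rightarrow> real mat \<Rightarrow> bool" where
  "psd_mat n A \<longleftrightarrow> A \<in> carrier_mat n n \<and> transpose_mat A = A \<and>
     (\<forall>x\<in>carrier_vec n. x \<bullet> (A *\<^sub>v x) \<ge> 0)"

definition correlation_mat :: "nat \<Rightarrow> real mat \<Rightarrow> bool" where
  "correlation_mat n A \<longleftrightarrow> psd_mat n A \<and> (\<forall>i<n. A $$ (i, i) = 1)"

definition realizable :: "nat \<Rightarrow> real vec set \<Rightarrow> bool" where
  "realizable n U \<longleftrightarrow> (\<exists>A. correlation_mat n A \<and> (\<forall>u\<in>U. A *\<^sub>v u = 0\<^sub>v n))"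

end

theory Submission
  imports Defs "Jordan_Normal_Form.Determinant"
begin

text \<open>Let \<open>P\<close> be the orthogonal projector onto \<open>U\<close> and \<open>Q = I - P\<close>. A correlation matrix
  is sought in the form \<open>A = Q diag(d) Q\<close> with \<open>d \<ge> 0\<close>: such an \<open>A\<close> is positive
  semidefinite and annihilates \<open>U\<close>, and its diagonal is \<open>S d\<close>, where \<open>S\<close> is the entrywise square
  of \<open>Q\<close>. As \<open>Q\<close> is a symmetric idempotent, row \<open>i\<close> of \<open>S\<close> sums to \<open>q\<^sub>i = 1 - |P e\<^sub>i|\<^sup>2\<close>
  and has diagonal entry \<open>q\<^sub>i\<^sup>2\<close>. When \<open>\<mu>(U) < 1/2\<close> all \<open>q\<^sub>i > 1/2\<close>, so \<open>S\<close> is strictly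
  diagonally dominant, \<open>S d = 1\<close> has a solution, and a maximum principle shows that it is
  nonnegative.

  For \<open>1/2 < \<alpha> \<le> 1\<close> the line in \<open>\<real>\<^sup>2\<close> spanned by \<open>(\<surd>\<alpha>, \<surd>(1-\<alpha>))\<close> has
  coherence \<open>\<alpha>\<close>, but a \<open>2 \<times> 2\<close> correlation matrix \<open>[[1, c], [c, 1]]\<close> annihilates \<open>(a, b)\<close>
  only if \<open>a = -c b\<close> and \<open>b = -c a\<close>, which forces \<open>a\<^sup>2 = b\<^sup>2\<close>.\<close>

section \<open>Orthogonal projections onto subspaces\<close>

lemma scalar_prod_eq_sum:
  "v \<in> carrier_vec n \<Longrightarrow> w \<in> carrier_vec n \<Longrightarrow> v \<bullet> w = (\<Sum>i<n. v $ i * w $ i)"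
  by (simp add: scalar_prod_def atLeast0LessThan)

lemma scalar_prod_self_nonneg: "v \<in> carrier_vec n \<Longrightarrow> (0::real) \<le> v \<bullet> v"
  by (simp add: scalar_prod_eq_sum sum_nonneg)

lemma scalar_prod_self_eq_0D:
  assumes "v \<in> carrier_vec n" "v \<bullet> v = (0::real)" shows "v = 0\<^sub>v n"
proof (rule eq_vecI)
  have "(\<Sum>i<n. v $ i * v $ i) = 0" using assms scalar_prod_eq_sum by metis
  then have "\<forall>i\<in>{..<n}. v $ i * v $ i = 0" by (subst sum_nonneg_eq_0_iff[symmetric]) auto
  then show "\<And>i. i < dim_vec (0\<^sub>v n) \<Longrightarrow> v $ i = 0\<^sub>v n $ i" by auto
  show "dim_vec v = dim_vec (0\<^sub>v n)" using assms by auto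
qed

lemma subspace_carrier_vec: "is_subspace n U \<Longrightarrow> u \<in> U \<Longrightarrow> u \<in> carrier_vec n"
  by (auto simp: is_subspace_def)

lemma subspace_diff:
  assumes U: "is_subspace n U" and "u \<in> U" "v \<in> U" shows "u - v \<in> U"
proof -
  have "u - v = u + (-1) \<cdot>\<^sub>v v"
    using assms subspace_carrier_vec by (intro eq_vecI) auto
  then show ?thesis using assms by (simp add: is_subspace_def)
qed

definition vec_lincomb :: "nat \<Rightarrow> nat \<Rightarrow> (nat \<Rightarrow> real) \<Rightarrow> (nat \<Rightarrow> real vec) \<Rightarrow> real vec" where
  "vec_lincomb n m c w = vec n (\<lambda>i. \<Sum>k<m. c k * w k $ i)"

lemma vec_lincomb_carrier [simp]: "vec_lincomb n m c w \<in> carrier_vec n"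
  by (simp add: vec_lincomb_def)

lemma vec_lincomb_in_subspace:
  assumes U: "is_subspace n U" and w: "\<forall>k<m. w k \<in> U" shows "vec_lincomb n m c w \<in> U"
  using w
proof (induction m)
  case 0
  have "vec_lincomb n 0 c w = 0\<^sub>v n" by (auto simp: vec_lincomb_def)
  then show ?case using U by (simp add: is_subspace_def)
next
  case (Suc m)
  have "w m \<in> carrier_vec n" using Suc.prems U subspace_carrier_vec by blast
  then have "vec_lincomb n (Suc m) c w = vec_lincomb n m c w + c m \<cdot>\<^sub>v w m"
    by (auto simp: vec_lincomb_def)
  then show ?case using Suc U by (simp add: is_subspace_def)
qed

lemma vec_lincomb_scalar_prod:
  assumes w: "\<forall>k<m. w k \<in> carrier_vec n" and y: "y \<in> carrier_vec n"
  shows "vec_lincomb n m c w \<bullet> y = (\<Sum>k<m. c k * (w k \<bullet> y))"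
proof -
  have "vec_lincomb n m c w \<bullet> y = (\<Sum>i<n. (\<Sum>k<m. c k * w k $ i) * y $ i)"
    using y by (simp add: scalar_prod_eq_sum vec_lincomb_def)
  also have "\<dots> = (\<Sum>k<m. c k * (\<Sum>i<n. w k $ i * y $ i))"
    by (simp add: sum_distrib_right sum_distrib_left sum.swap[of _ "{..<m}"] mult.assoc)
  also have "\<dots> = (\<Sum>k<m. c k * (w k \<bullet> y))"
    using w y by (intro sum.cong) (auto simp: scalar_prod_eq_sum)
  finally show ?thesis .
qed

definition orthonormal_in :: "real vec set \<Rightarrow> nat \<Rightarrow> (nat \<Rightarrow> real vec) \<Rightarrow> bool" where
  "orthonormal_in U m w \<longleftrightarrow>
     (\<forall>k<m. w k \<in> U) \<and> (\<forall>k<m. \<forall>l<m. w k \<bullet> w l = (if k = l then 1 else 0))"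

lemma orthonormal_in_carrier:
  "is_subspace n U \<Longrightarrow> orthonormal_in U m w \<Longrightarrow> \<forall>k<m. w k \<in> carrier_vec n"
  by (auto simp: orthonormal_in_def subspace_carrier_vec)

lemma orthonormal_lincomb_coeff:
  assumes U: "is_subspace n U" and on: "orthonormal_in U m w" and l: "l < m"
  shows "vec_lincomb n m c w \<bullet> w l = c l"
proof -
  have "vec_lincomb n m c w \<bullet> w l = (\<Sum>k<m. c k * (w k \<bullet> w l))"
    using vec_lincomb_scalar_prod orthonormal_in_carrier[OF U on] l by blast
  also have "\<dots> = (\<Sum>k<m. if k = l then c k else 0)"
    using on l by (intro sum.cong) (auto simp: orthonormal_in_def)
  finally show ?thesis using l by simp
qed

lemma bessel_inequality:
  assumes U: "is_subspace n U" and on: "orthonormal_in U m w" and y: "y \<in> carrier_vec n"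
  shows "(\<Sum>k<m. (y \<bullet> w k)\<^sup>2) \<le> y \<bullet> y"
proof -
  have wc: "\<forall>k<m. w k \<in> carrier_vec n" using orthonormal_in_carrier[OF U on] .
  define p where "p = vec_lincomb n m (\<lambda>k. y \<bullet> w k) w"
  have pc: "p \<in> carrier_vec n" by (simp add: p_def)
  have py: "p \<bullet> y = (\<Sum>k<m. (y \<bullet> w k)\<^sup>2)"
    unfolding p_def using vec_lincomb_scalar_prod[OF wc y] wc y
    by (simp add: power2_eq_square comm_scalar_prod[of _ n y])
  have pp: "p \<bullet> p = (\<Sum>k<m. (y \<bullet> w k)\<^sup>2)"
  proof -
    have "p \<bullet> p = (\<Sum>k<m. (y \<bullet> w k) * (w k \<bullet> p))"
      unfolding p_def using vec_lincomb_scalar_prod[OF wc] by simp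
    also have "\<dots> = (\<Sum>k<m. (y \<bullet> w k) * (y \<bullet> w k))"
      using orthonormal_lincomb_coeff[OF U on] wc comm_scalar_prod[of _ n p]
      by (intro sum.cong) (auto simp: p_def)
    finally show ?thesis by (simp add: power2_eq_square)
  qed
  have "0 \<le> (y - p) \<bullet> (y - p)" using scalar_prod_self_nonneg[of "y - p" n] y pc by simp
  also have "(y - p) \<bullet> (y - p) = y \<bullet> y - 2 * (p \<bullet> y) + p \<bullet> p"
  proof -
    have "(y - p) \<bullet> (y - p) = (\<Sum>i<n. y $ i * y $ i - 2 * (p $ i * y $ i) + p $ i * p $ i)"
      using y pc by (simp add: scalar_prod_eq_sum[of _ n] algebra_simps)
    also have "\<dots> = y \<bullet> y - 2 * (p \<bullet> y) + p \<bullet> p"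
      using y pc by (simp add: scalar_prod_eq_sum sum_subtractf sum.distrib sum_distrib_left)
    finally show ?thesis .
  qed
  finally show ?thesis using py pp by simp
qed

lemma orthonormal_in_length_le:
  assumes U: "is_subspace n U" and on: "orthonormal_in U m w" shows "m \<le> n"
proof -
  have wc: "\<forall>k<m. w k \<in> carrier_vec n" using orthonormal_in_carrier[OF U on] .
  have "real m = (\<Sum>k<m. w k \<bullet> w k)" using on by (simp add: orthonormal_in_def)
  also have "\<dots> = (\<Sum>k<m. \<Sum>i<n. (unit_vec n i \<bullet> w k)\<^sup>2)"
    using wc by (intro sum.cong) (auto simp: scalar_prod_eq_sum power2_eq_square)
  also have "\<dots> = (\<Sum>i<n. \<Sum>k<m. (unit_vec n i \<bullet> w k)\<^sup>2)" by (rule sum.swap)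
  also have "\<dots> \<le> (\<Sum>i<n. unit_vec n i \<bullet> unit_vec n i)"
    by (intro sum_mono bessel_inequality[OF U on]) simp
  also have "\<dots> = real n" by simp
  finally show ?thesis by simp
qed

lemma orthonormal_in_extend:
  assumes U: "is_subspace n U" and on: "orthonormal_in U m w"
    and r: "r \<in> U" "r \<noteq> 0\<^sub>v n" and orth: "\<forall>l<m. w l \<bullet> r = 0"
  shows "orthonormal_in U (Suc m) (w(m := (1 / sqrt (r \<bullet> r)) \<cdot>\<^sub>v r))"
proof -
  have rc: "r \<in> carrier_vec n" using U r subspace_carrier_vec by auto
  have wc: "\<forall>k<m. w k \<in> carrier_vec n" using orthonormal_in_carrier[OF U on] .
  have rpos: "r \<bullet> r > 0"
    using scalar_prod_self_nonneg[OF rc] scalar_prod_self_eq_0D[OF rc] r(2) by force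
  define v where "v = (1 / sqrt (r \<bullet> r)) \<cdot>\<^sub>v r"
  have "v \<in> U" using U r by (simp add: is_subspace_def v_def)
  moreover have "v \<bullet> v = 1" using rc rpos by (simp add: v_def)
  moreover have "w l \<bullet> v = 0" "v \<bullet> w l = 0" if "l < m" for l
    using orth comm_scalar_prod[of r n "w l"] rc wc that by (simp_all add: v_def)
  ultimately show ?thesis unfolding v_def[symmetric] using on
    by (auto simp: orthonormal_in_def less_Suc_eq)
qed

lemma orthonormal_maximal_expansion:
  assumes U: "is_subspace n U" and on: "orthonormal_in U m w"
    and maximal: "\<forall>w'. \<not> orthonormal_in U (Suc m) w'" and u: "u \<in> U"
  shows "u = vec_lincomb n m (\<lambda>k. u \<bullet> w k) w"
proof -
  have wc: "\<forall>k<m. w k \<in> carrier_vec n" using orthonormal_in_carrier[OF U on] .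
  have uc: "u \<in> carrier_vec n" using U u subspace_carrier_vec by auto
  define q where "q = vec_lincomb n m (\<lambda>k. u \<bullet> w k) w"
  have qU: "q \<in> U" unfolding q_def using on vec_lincomb_in_subspace[OF U] by (auto simp: orthonormal_in_def)
  have qc: "q \<in> carrier_vec n" by (simp add: q_def)
  have orth: "\<forall>l<m. w l \<bullet> (u - q) = 0"
  proof (intro allI impI)
    fix l assume "l < m"
    have "w l \<bullet> (u - q) = u \<bullet> w l - q \<bullet> w l"
      using scalar_prod_minus_distrib[of "w l" n u q] comm_scalar_prod[of _ n "w l"] wc \<open>l < m\<close> uc qc
      by auto
    then show "w l \<bullet> (u - q) = 0" using orthonormal_lincomb_coeff[OF U on \<open>l < m\<close>] by (simp add: q_def)
  qed
  have "u - q = 0\<^sub>v n"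
    using orthonormal_in_extend[OF U on subspace_diff[OF U u qU] _ orth] maximal by blast
  then show ?thesis using uc qc unfolding q_def[symmetric]
    by (metis carrier_vecD eq_vecI index_minus_vec(1) index_zero_vec(1) right_minus_eq)
qed

lemma orth_proj_exists:
  assumes U: "is_subspace n U" and x: "x \<in> carrier_vec n"
  shows "\<exists>p\<in>U. \<forall>u\<in>U. (x - p) \<bullet> u = 0"
proof -
  have "orthonormal_in U 0 w" for w by (simp add: orthonormal_in_def)
  then obtain m where "\<exists>w. orthonormal_in U m w" and maximal: "\<forall>w'. \<not> orthonormal_in U (Suc m) w'"
    using Nat.ex_has_greatest_nat[of "\<lambda>m. \<exists>w. orthonormal_in U m w" 0 n]
      orthonormal_in_length_le[OF U] by (metis not_less_eq_eq)
  then obtain w where on: "orthonormal_in U m w" by blast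
  have wc: "\<forall>k<m. w k \<in> carrier_vec n" using orthonormal_in_carrier[OF U on] .
  define p where "p = vec_lincomb n m (\<lambda>k. x \<bullet> w k) w"
  have pc: "p \<in> carrier_vec n" by (simp add: p_def)
  have residual_orth: "w k \<bullet> (x - p) = 0" if "k < m" for k
    using orthonormal_lincomb_coeff[OF U on that] scalar_prod_minus_distrib[of "w k" n x p]
      comm_scalar_prod[of _ n "w k"] wc that x pc by (auto simp: p_def)
  have "(x - p) \<bullet> u = 0" if u: "u \<in> U" for u
  proof -
    have "(x - p) \<bullet> u = u \<bullet> (x - p)"
      using comm_scalar_prod u U subspace_carrier_vec x pc by (metis minus_carrier_vec)
    also have "\<dots> = (\<Sum>k<m. (u \<bullet> w k) * (w k \<bullet> (x - p)))"
      by (subst orthonormal_maximal_expansion[OF U on maximal u])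
        (use vec_lincomb_scalar_prod[OF wc] x pc in simp)
    finally show ?thesis using residual_orth by simp
  qed
  moreover have "p \<in> U"
    unfolding p_def using on vec_lincomb_in_subspace[OF U] by (auto simp: orthonormal_in_def)
  ultimately show ?thesis by blast
qed

lemma orth_proj_unique:
  assumes U: "is_subspace n U" and x: "x \<in> carrier_vec n"
    and p: "p \<in> U" "\<forall>u\<in>U. (x - p) \<bullet> u = 0" and p': "p' \<in> U" "\<forall>u\<in>U. (x - p') \<bullet> u = 0"
  shows "p' = p"
proof -
  have pc: "p \<in> carrier_vec n" and p'c: "p' \<in> carrier_vec n"
    using U p p' subspace_carrier_vec by auto
  have "p' - p \<in> U" using subspace_diff[OF U p'(1) p(1)] .
  then have "(x - p) \<bullet> (p' - p) = 0" "(x - p') \<bullet> (p' - p) = 0" using p p' by auto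
  then have "(p' - p) \<bullet> (p' - p) = 0"
    using minus_scalar_prod_distrib[of _ n _ "p' - p"] x pc p'c by simp
  then have "p' - p = 0\<^sub>v n" using scalar_prod_self_eq_0D[of "p' - p" n] pc p'c by simp
  then show ?thesis using pc p'c
    by (metis carrier_vecD eq_vecI index_minus_vec(1) index_zero_vec(1) right_minus_eq)
qed

lemma orth_proj:
  assumes U: "is_subspace n U" and x: "x \<in> carrier_vec n"
  shows "orth_proj U x \<in> U" and "\<forall>u\<in>U. (x - orth_proj U x) \<bullet> u = 0"
proof -
  have "\<exists>!p. p \<in> U \<and> (\<forall>u\<in>U. (x - p) \<bullet> u = 0)"
    using orth_proj_exists[OF U x] orth_proj_unique[OF U x] by blast
  then have "orth_proj U x \<in> U \<and> (\<forall>u\<in>U. (x - orth_proj U x) \<bullet> u = 0)"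
    unfolding orth_proj_def by (rule theI')
  then show "orth_proj U x \<in> U" and "\<forall>u\<in>U. (x - orth_proj U x) \<bullet> u = 0" by auto
qed

lemma orth_proj_eqI:
  assumes "is_subspace n U" "x \<in> carrier_vec n" "p \<in> U" "\<forall>u\<in>U. (x - p) \<bullet> u = 0"
  shows "orth_proj U x = p"
  using orth_proj_unique[OF assms(1,2) orth_proj[OF assms(1,2)] assms(3,4)] by simp

section \<open>Nonnegative solutions of diagonally dominant systems\<close>

lemma ex_argmax_lessThan:
  fixes f :: "nat \<Rightarrow> 'a::linorder" assumes "0 < n" shows "\<exists>i<n. \<forall>j<n. f j \<le> f i"
proof -
  have "Max (f ` {..<n}) \<in> f ` {..<n}" using assms by (intro Max_in) auto
  then obtain i where "i < n" "f i = Max (f ` {..<n})" by auto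
  then show ?thesis by auto
qed

lemma sum_lessThan_remove:
  fixes f :: "nat \<Rightarrow> 'a::comm_monoid_add"
  assumes "i < n" shows "(\<Sum>j<n. f j) = f i + (\<Sum>j\<in>{..<n}-{i}. f j)"
  using assms by (subst sum.remove[of _ i]) auto

lemma det_nonzero_if_diag_dominant:
  fixes A :: "real mat"
  assumes A: "A \<in> carrier_mat n n"
    and dominant: "\<forall>i<n. (\<Sum>j\<in>{..<n}-{i}. \<bar>A $$ (i,j)\<bar>) < \<bar>A $$ (i,i)\<bar>"
  shows "det A \<noteq> 0"
proof
  assume "det A = 0"
  then obtain v where v: "v \<in> carrier_vec n" "v \<noteq> 0\<^sub>v n" "A *\<^sub>v v = 0\<^sub>v n"
    using det_0_iff_vec_prod_zero_field[OF A] by auto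
  then have "0 < n" by (cases "n = 0") auto
  then obtain i where i: "i < n" and max: "\<forall>j<n. \<bar>v $ j\<bar> \<le> \<bar>v $ i\<bar>"
    using ex_argmax_lessThan[of n "\<lambda>j. \<bar>v $ j\<bar>"] by auto
  have "v $ i \<noteq> 0"
  proof
    assume "v $ i = 0"
    then have "v = 0\<^sub>v n" using max v(1) by (intro eq_vecI) fastforce+
    then show False using v(2) by simp
  qed
  have "(\<Sum>j<n. A $$ (i,j) * v $ j) = (A *\<^sub>v v) $ i"
    using i v(1) A by (simp add: scalar_prod_eq_sum[of _ n] row_def)
  then have "A $$ (i,i) * v $ i = - (\<Sum>j\<in>{..<n}-{i}. A $$ (i,j) * v $ j)"
    using v(3) i sum_lessThan_remove[OF i, of "\<lambda>j. A $$ (i,j) * v $ j"] by simp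
  then have "\<bar>A $$ (i,i)\<bar> * \<bar>v $ i\<bar> = \<bar>\<Sum>j\<in>{..<n}-{i}. A $$ (i,j) * v $ j\<bar>"
    by (simp add: abs_mult[symmetric])
  also have "\<dots> \<le> (\<Sum>j\<in>{..<n}-{i}. \<bar>A $$ (i,j)\<bar> * \<bar>v $ i\<bar>)"
    by (rule order_trans[OF sum_abs], rule sum_mono)
      (use max in \<open>auto simp: abs_mult intro: mult_left_mono\<close>)
  also have "\<dots> < \<bar>A $$ (i,i)\<bar> * \<bar>v $ i\<bar>"
    using dominant i \<open>v $ i \<noteq> 0\<close> by (simp add: sum_distrib_right[symmetric])
  finally show False by simp
qed

lemma diag_dominant_solvable:
  fixes S :: "nat \<Rightarrow> nat \<Rightarrow> real"
  assumes "\<forall>i<n. (\<Sum>j\<in>{..<n}-{i}. \<bar>S i j\<bar>) < \<bar>S i i\<bar>"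
  shows "\<exists>x. \<forall>i<n. (\<Sum>j<n. S i j * x j) = b i"
proof -
  define A where "A = mat n n (\<lambda>(i,j). S i j)"
  have A: "A \<in> carrier_mat n n" by (simp add: A_def)
  have "det A \<noteq> 0" using det_nonzero_if_diag_dominant[OF A] assms by (simp add: A_def)
  then obtain B where B: "B \<in> carrier_mat n n" "A * B = 1\<^sub>m n"
    using det_non_zero_imp_unit[OF A, of "()"] by (auto simp: Units_def ring_mat_def)
  define y where "y = B *\<^sub>v vec n b"
  have "A *\<^sub>v y = vec n b"
    unfolding y_def using A B by (simp add: assoc_mult_mat_vec[symmetric, of _ n n _ n])
  moreover have "(A *\<^sub>v y) $ i = (\<Sum>j<n. S i j * y $ j)" if "i < n" for i
    using that B by (simp add: A_def y_def scalar_prod_eq_sum[of _ n] row_def)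
  ultimately show ?thesis by (metis index_vec)
qed

text \<open>The maximum principle below measures how far the unknowns leave the window \<open>[0, 4]\<close>:
  a row with diagonal entry \<open>s\<close> and off-diagonal mass \<open>\<sigma>\<close>, \<open>4\<sigma> \<le> 1 < 4s\<close>, cannot have its own
  unknown be the one that leaves it farthest.\<close>
lemma row_window_strict:
  fixes s \<sigma> x y t :: real
  assumes "\<sigma> < s" "4 * \<sigma> \<le> 1" "1 < 4 * s" "0 < t"
    and "s * x + y = 1" "- (\<sigma> * t) \<le> y" "y \<le> \<sigma> * (4 + t)"
  shows "- t < x \<and> x < 4 + t"
proof
  have "\<sigma> * t < s * t" using assms by (simp add: mult_strict_right_mono)
  show "- t < x"
  proof (rule ccontr)
    assume "\<not> - t < x"
    then have "s * x \<le> - (s * t)" using assms mult_left_mono[of x "- t" s] by simp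
    then show False using assms \<open>\<sigma> * t < s * t\<close> by (simp add: algebra_simps)
  qed
  show "x < 4 + t"
  proof (rule ccontr)
    assume "\<not> x < 4 + t"
    then have "4 * s + s * t \<le> s * x" using assms mult_left_mono[of "4 + t" x s]
      by (simp add: algebra_simps)
    then show False using assms \<open>\<sigma> * t < s * t\<close> by (simp add: algebra_simps)
  qed
qed

lemma unit_rhs_solution_nonneg:
  fixes S :: "nat \<Rightarrow> nat \<Rightarrow> real" and q d :: "nat \<Rightarrow> real"
  assumes S_nonneg: "\<forall>i<n. \<forall>j<n. 0 \<le> S i j"
    and S_diag: "\<forall>i<n. S i i = (q i)\<^sup>2" and S_row: "\<forall>i<n. (\<Sum>j<n. S i j) = q i"
    and q: "\<forall>i<n. 1/2 < q i"
    and sol: "\<forall>i<n. (\<Sum>j<n. S i j * d j) = 1"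
  shows "\<forall>i<n. 0 \<le> d i"
proof (cases "n = 0")
  case False
  define \<delta> where "\<delta> j = max 0 (max (- d j) (d j - 4))" for j
  obtain i where i: "i < n" and max: "\<forall>j<n. \<delta> j \<le> \<delta> i"
    using ex_argmax_lessThan[of n \<delta>] False by auto
  define \<sigma> where "\<sigma> = (\<Sum>j\<in>{..<n}-{i}. S i j)"
  have \<sigma>: "\<sigma> = q i - (q i)\<^sup>2" using S_row S_diag i sum_lessThan_remove[OF i, of "S i"] by (simp add: \<sigma>_def)
  have "1/2 < q i" using q i by blast
  then have "0 < q i * (2 * q i - 1)" "0 < (2 * q i - 1) * (2 * q i + 1)"
    by (auto intro!: mult_pos_pos)
  moreover have "0 \<le> (2 * q i - 1)\<^sup>2" by simp
  ultimately have gaps: "\<sigma> < S i i" "4 * \<sigma> \<le> 1" "1 < 4 * S i i"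
    using S_diag i \<sigma> by (simp_all add: power2_eq_square algebra_simps)
  have "\<delta> i \<le> 0"
  proof (rule ccontr)
    assume pos: "\<not> \<delta> i \<le> 0"
    have window: "- \<delta> i \<le> d j \<and> d j \<le> 4 + \<delta> i" if "j < n" for j
      using max that by (auto simp: \<delta>_def)
    have row: "S i i * d i + (\<Sum>j\<in>{..<n}-{i}. S i j * d j) = 1"
      using sol i sum_lessThan_remove[OF i, of "\<lambda>j. S i j * d j"] by simp
    have upper: "(\<Sum>j\<in>{..<n}-{i}. S i j * d j) \<le> \<sigma> * (4 + \<delta> i)"
      unfolding \<sigma>_def sum_distrib_right using S_nonneg i window
      by (intro sum_mono mult_left_mono) auto
    have "(\<Sum>j\<in>{..<n}-{i}. S i j * (- \<delta> i)) \<le> (\<Sum>j\<in>{..<n}-{i}. S i j * d j)"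
      using S_nonneg i window by (intro sum_mono mult_left_mono) auto
    then have lower: "- (\<sigma> * \<delta> i) \<le> (\<Sum>j\<in>{..<n}-{i}. S i j * d j)"
      by (simp add: \<sigma>_def sum_distrib_right sum_negf)
    have "- \<delta> i < d i \<and> d i < 4 + \<delta> i"
      using row_window_strict[OF gaps _ row lower upper] pos by simp
    then show False using pos by (auto simp: \<delta>_def)
  qed
  then show ?thesis using max by (fastforce simp: \<delta>_def)
qed simp

lemma unit_rhs_nonneg_solution_exists:
  fixes S :: "nat \<Rightarrow> nat \<Rightarrow> real" and q :: "nat \<Rightarrow> real"
  assumes S_nonneg: "\<forall>i<n. \<forall>j<n. 0 \<le> S i j"
    and S_diag: "\<forall>i<n. S i i = (q i)\<^sup>2" and S_row: "\<forall>i<n. (\<Sum>j<n. S i j) = q i"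
    and q: "\<forall>i<n. 1/2 < q i"
  shows "\<exists>d. (\<forall>i<n. 0 \<le> d i) \<and> (\<forall>i<n. (\<Sum>j<n. S i j * d j) = 1)"
proof -
  have "(\<Sum>j\<in>{..<n}-{i}. \<bar>S i j\<bar>) < \<bar>S i i\<bar>" if i: "i < n" for i
  proof -
    have "(\<Sum>j\<in>{..<n}-{i}. \<bar>S i j\<bar>) = q i - (q i)\<^sup>2"
      using S_nonneg S_row S_diag i sum_lessThan_remove[OF i, of "S i"] by simp
    also have "\<dots> < (q i)\<^sup>2"
      using q i mult_pos_pos[of "q i" "2 * q i - 1"] by (simp add: power2_eq_square algebra_simps)
    finally show ?thesis using S_diag i by simp
  qed
  then obtain d where "\<forall>i<n. (\<Sum>j<n. S i j * d j) = 1"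
    using diag_dominant_solvable[of n S "\<lambda>_. 1"] by blast
  then show ?thesis using unit_rhs_solution_nonneg[OF assms] by blast
qed

section \<open>Realizability below coherence one half\<close>

lemma psd_mat_diag:
  assumes "\<forall>i<n. 0 \<le> d i" shows "psd_mat n (mat_diag n d)"
proof -
  have "x \<bullet> (mat_diag n d *\<^sub>v x) = (\<Sum>i<n. d i * (x $ i)\<^sup>2)" if x: "x \<in> carrier_vec n" for x
  proof -
    have "mat_diag n d *\<^sub>v x = vec n (\<lambda>i. d i * x $ i)"
      using x by (intro eq_vecI) (auto simp: mat_diag_def scalar_prod_eq_sum[of _ n] row_def
          if_distrib[of "\<lambda>a. a * _"] cong: if_cong)
    then show ?thesis using x by (simp add: scalar_prod_eq_sum[of _ n] power2_eq_square ac_simps)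
  qed
  then show ?thesis using assms
    by (auto simp: psd_mat_def mat_diag_def intro!: eq_matI sum_nonneg)
qed

lemma psd_mat_congruence:
  assumes D: "psd_mat n D" and Q: "Q \<in> carrier_mat n n"
  shows "psd_mat n (transpose_mat Q * D * Q)"
proof -
  have Dc: "D \<in> carrier_mat n n" and D_sym: "transpose_mat D = D"
    using D by (auto simp: psd_mat_def)
  have "transpose_mat (transpose_mat Q * D * Q) = transpose_mat Q * D * Q"
    using Q Dc D_sym by (simp add: transpose_mult[of _ n n _ n])
  moreover have "0 \<le> x \<bullet> ((transpose_mat Q * D * Q) *\<^sub>v x)" if x: "x \<in> carrier_vec n" for x
  proof -
    have "x \<bullet> ((transpose_mat Q * D * Q) *\<^sub>v x) = x \<bullet> (transpose_mat Q *\<^sub>v (D *\<^sub>v (Q *\<^sub>v x)))"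
      using Q Dc x by (simp add: assoc_mult_mat_vec[of _ n n _ n])
    also have "\<dots> = (Q *\<^sub>v x) \<bullet> (D *\<^sub>v (Q *\<^sub>v x))"
      using transpose_vec_mult_scalar[of "transpose_mat Q" n n "D *\<^sub>v (Q *\<^sub>v x)" x] Q Dc x by simp
    finally show ?thesis using D Q x by (simp add: psd_mat_def)
  qed
  ultimately show ?thesis using Q Dc by (simp add: psd_mat_def)
qed

lemma realizable_if_diag_scaling:
  assumes U: "U \<subseteq> carrier_vec n"
    and Q: "Q \<in> carrier_mat n n" "transpose_mat Q = Q" and kernel: "\<forall>u\<in>U. Q *\<^sub>v u = 0\<^sub>v n"
    and d_nonneg: "\<forall>k<n. 0 \<le> d k" and unit_diag: "\<forall>i<n. (\<Sum>k<n. (Q $$ (i,k))\<^sup>2 * d k) = 1"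
  shows "realizable n U"
proof -
  define A where "A = Q * mat_diag n d * Q"
  have "psd_mat n A"
    using psd_mat_congruence[OF psd_mat_diag[OF d_nonneg] Q(1)] Q by (simp add: A_def)
  moreover have "A $$ (i,i) = 1" if i: "i < n" for i
  proof -
    have "A $$ (i,i) = (\<Sum>k<n. Q $$ (i,k) * d k * Q $$ (k,i))"
      using Q i by (simp add: A_def mat_diag_mult_right[of _ n] scalar_prod_eq_sum[of _ n] row_def col_def)
    also have "\<dots> = (\<Sum>k<n. (Q $$ (i,k))\<^sup>2 * d k)"
    proof (rule sum.cong)
      fix k assume "k \<in> {..<n}"
      then have "Q $$ (k,i) = Q $$ (i,k)" using arg_cong[OF Q(2), of "\<lambda>M. M $$ (i,k)"] Q(1) i by simp
      then show "Q $$ (i,k) * d k * Q $$ (k,i) = (Q $$ (i,k))\<^sup>2 * d k" by (simp add: power2_eq_square)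
    qed simp
    finally show ?thesis using unit_diag i by simp
  qed
  moreover have "A *\<^sub>v u = 0\<^sub>v n" if "u \<in> U" for u
  proof -
    have "A *\<^sub>v u = (Q * mat_diag n d) *\<^sub>v (Q *\<^sub>v u)"
      using that U Q assoc_mult_mat_vec[of "Q * mat_diag n d" n n Q n u] by (auto simp: A_def)
    also have "\<dots> = (Q * mat_diag n d) *\<^sub>v 0\<^sub>v n" using that kernel by simp
    finally show ?thesis using Q by (intro eq_vecI) (auto simp: row_def mat_diag_def)
  qed
  ultimately show ?thesis unfolding realizable_def correlation_mat_def by blast
qed

definition proj_mat :: "nat \<Rightarrow> real vec set \<Rightarrow> real mat" where
  "proj_mat n U = mat n n (\<lambda>(i,j). orth_proj U (unit_vec n j) $ i)"

lemma orth_proj_unit_scalar_prod: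
  assumes U: "is_subspace n U" and j: "j < n" and u: "u \<in> U"
  shows "orth_proj U (unit_vec n j) \<bullet> u = u $ j"
proof -
  have uc: "u \<in> carrier_vec n" using U u subspace_carrier_vec by auto
  have "(unit_vec n j - orth_proj U (unit_vec n j)) \<bullet> u = 0"
    using orth_proj[OF U unit_vec_carrier] u by simp
  then show ?thesis
    using minus_scalar_prod_distrib[OF unit_vec_carrier _ uc] orth_proj(1)[OF U unit_vec_carrier]
      subspace_carrier_vec[OF U] uc j by simp
qed

lemma proj_mat_entry_sym:
  assumes U: "is_subspace n U" and "i < n" "j < n"
  shows "proj_mat n U $$ (i,j) = proj_mat n U $$ (j,i)"
proof -
  define p where "p k = orth_proj U (unit_vec n k)" for k
  have "p k \<in> U" for k using orth_proj(1)[OF U unit_vec_carrier] by (simp add: p_def)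
  then have "p j $ i = p i \<bullet> p j" "p i $ j = p j \<bullet> p i"
    using orth_proj_unit_scalar_prod[OF U] assms(2,3) by (simp_all add: p_def)
  then show ?thesis
    using comm_scalar_prod[of "p i" n "p j"] subspace_carrier_vec[OF U \<open>\<And>k. p k \<in> U\<close>] assms(2,3)
    by (simp add: proj_mat_def p_def)
qed

lemma proj_mat_fixes:
  assumes U: "is_subspace n U" and u: "u \<in> U" shows "proj_mat n U *\<^sub>v u = u"
proof (rule eq_vecI)
  fix i assume "i < dim_vec u"
  then have i: "i < n" using subspace_carrier_vec[OF U u] by (simp add: carrier_vecD)
  have "orth_proj U (unit_vec n i) \<in> carrier_vec n"
    using orth_proj(1)[OF U unit_vec_carrier] subspace_carrier_vec[OF U] by blast
  then have "row (proj_mat n U) i = orth_proj U (unit_vec n i)"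
    using i proj_mat_entry_sym[OF U i] by (intro eq_vecI) (auto simp: proj_mat_def)
  then show "(proj_mat n U *\<^sub>v u) $ i = u $ i"
    using orth_proj_unit_scalar_prod[OF U i u] i by (simp add: proj_mat_def)
qed (use subspace_carrier_vec[OF U u] in \<open>auto simp: proj_mat_def carrier_vecD\<close>)

lemma proj_mat_diag:
  assumes U: "is_subspace n U" and i: "i < n"
  shows "proj_mat n U $$ (i,i) = sq_norm_vec (orth_proj U (unit_vec n i))"
    and "(\<Sum>j<n. (proj_mat n U $$ (i,j))\<^sup>2) = proj_mat n U $$ (i,i)"
proof -
  define p where "p = orth_proj U (unit_vec n i)"
  have pU: "p \<in> U" and pc: "p \<in> carrier_vec n"
    using orth_proj(1)[OF U unit_vec_carrier] subspace_carrier_vec[OF U] by (auto simp: p_def)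
  have row: "proj_mat n U $$ (i,j) = p $ j" if "j < n" for j
    using proj_mat_entry_sym[OF U i that] i that by (simp add: proj_mat_def p_def)
  show "proj_mat n U $$ (i,i) = sq_norm_vec (orth_proj U (unit_vec n i))"
    using row[OF i] orth_proj_unit_scalar_prod[OF U i pU] by (simp add: sq_norm_vec_def p_def)
  show "(\<Sum>j<n. (proj_mat n U $$ (i,j))\<^sup>2) = proj_mat n U $$ (i,i)"
    using row orth_proj_unit_scalar_prod[OF U i pU] pc i
    by (simp add: scalar_prod_eq_sum[of _ n] power2_eq_square p_def)
qed

lemma proj_mat_diag_le_coherence:
  assumes U: "is_subspace n U" and i: "i < n" shows "proj_mat n U $$ (i,i) \<le> coherence n U"
  unfolding coherence_def using i proj_mat_diag(1)[OF U i] by (intro Max_ge) auto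

lemma proj_mat_complement_kernel:
  assumes U: "is_subspace n U" and u: "u \<in> U" shows "(1\<^sub>m n - proj_mat n U) *\<^sub>v u = 0\<^sub>v n"
proof -
  have "(1\<^sub>m n - proj_mat n U) *\<^sub>v u = u - u"
    using minus_mult_distrib_mat_vec[of "1\<^sub>m n" n n "proj_mat n U" u] subspace_carrier_vec[OF U u]
      proj_mat_fixes[OF U u] by (simp add: proj_mat_def)
  then show ?thesis using subspace_carrier_vec[OF U u] by simp
qed

lemma proj_mat_complement_row_sq_sum:
  assumes U: "is_subspace n U" and i: "i < n"
  shows "(\<Sum>j<n. ((1\<^sub>m n - proj_mat n U) $$ (i,j))\<^sup>2) = 1 - proj_mat n U $$ (i,i)"
proof -
  let ?P = "proj_mat n U"
  have "(\<Sum>j<n. ((1\<^sub>m n - ?P) $$ (i,j))\<^sup>2)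
      = (\<Sum>j<n. (if i = j then 1 - 2 * ?P $$ (i,j) else 0) + (?P $$ (i,j))\<^sup>2)"
    using i by (intro sum.cong) (auto simp: proj_mat_def power2_eq_square algebra_simps)
  then show ?thesis using i proj_mat_diag(2)[OF U i] by (simp add: sum.distrib)
qed

lemma realizable_if_coherence_lt_half:
  assumes U: "is_subspace n U" and coh: "coherence n U < 1/2"
  shows "realizable n U"
proof -
  define P where "P = proj_mat n U"
  define Q where "Q = 1\<^sub>m n - P"
  have Q: "Q \<in> carrier_mat n n" "transpose_mat Q = Q"
    using proj_mat_entry_sym[OF U] by (auto simp: Q_def P_def proj_mat_def intro!: eq_matI)
  have "\<forall>i<n. ((Q $$ (i,i))\<^sup>2 = (1 - P $$ (i,i))\<^sup>2) \<and> (\<Sum>j<n. (Q $$ (i,j))\<^sup>2) = 1 - P $$ (i,i)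
      \<and> 1/2 < 1 - P $$ (i,i)"
    using proj_mat_complement_row_sq_sum[OF U] proj_mat_diag_le_coherence[OF U] coh
    by (fastforce simp: Q_def P_def proj_mat_def)
  then obtain d where "\<forall>i<n. 0 \<le> d i" "\<forall>i<n. (\<Sum>j<n. (Q $$ (i,j))\<^sup>2 * d j) = 1"
    using unit_rhs_nonneg_solution_exists[of n "\<lambda>i j. (Q $$ (i,j))\<^sup>2" "\<lambda>i. 1 - P $$ (i,i)"]
    by force
  moreover have "\<forall>u\<in>U. Q *\<^sub>v u = 0\<^sub>v n"
    using proj_mat_complement_kernel[OF U] by (simp add: Q_def P_def)
  moreover have "U \<subseteq> carrier_vec n" using subspace_carrier_vec[OF U] by blast
  ultimately show ?thesis using realizable_if_diag_scaling[OF _ Q] by blast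
qed

section \<open>Non-realizable lines in the plane\<close>

lemma is_subspace_line:
  assumes u: "u \<in> carrier_vec n" shows "is_subspace n (range (\<lambda>c. c \<cdot>\<^sub>v u))"
  unfolding is_subspace_def
proof (intro conjI ballI allI)
  show "range (\<lambda>c. c \<cdot>\<^sub>v u) \<subseteq> carrier_vec n" using u by auto
  show "0\<^sub>v n \<in> range (\<lambda>c. c \<cdot>\<^sub>v u)"
    by (rule range_eqI[of _ _ 0]) (use u in \<open>auto intro!: eq_vecI\<close>)
next
  fix v w assume "v \<in> range (\<lambda>c. c \<cdot>\<^sub>v u)" "w \<in> range (\<lambda>c. c \<cdot>\<^sub>v u)"
  then obtain a b where "v = a \<cdot>\<^sub>v u" "w = b \<cdot>\<^sub>v u" by auto
  then show "v + w \<in> range (\<lambda>c. c \<cdot>\<^sub>v u)"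
    by (intro range_eqI[of _ _ "a + b"]) (use u in \<open>auto intro!: eq_vecI simp: algebra_simps\<close>)
next
  fix c :: real and v assume "v \<in> range (\<lambda>c. c \<cdot>\<^sub>v u)"
  then obtain a where "v = a \<cdot>\<^sub>v u" by auto
  then show "c \<cdot>\<^sub>v v \<in> range (\<lambda>c. c \<cdot>\<^sub>v u)"
    by (intro range_eqI[of _ _ "c * a"]) (use u in \<open>auto intro!: eq_vecI\<close>)
qed

lemma orth_proj_line:
  assumes u: "u \<in> carrier_vec n" "u \<bullet> u = 1" and x: "x \<in> carrier_vec n"
  shows "orth_proj (range (\<lambda>c. c \<cdot>\<^sub>v u)) x = (x \<bullet> u) \<cdot>\<^sub>v u"
proof (rule orth_proj_eqI[OF is_subspace_line[OF u(1)] x])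
  show "(x \<bullet> u) \<cdot>\<^sub>v u \<in> range (\<lambda>c. c \<cdot>\<^sub>v u)" by simp
  show "\<forall>v\<in>range (\<lambda>c. c \<cdot>\<^sub>v u). (x - (x \<bullet> u) \<cdot>\<^sub>v u) \<bullet> v = 0"
    using u x minus_scalar_prod_distrib[of x n "(x \<bullet> u) \<cdot>\<^sub>v u"] by auto
qed

lemma coherence_line:
  assumes u: "u \<in> carrier_vec n" "u \<bullet> u = 1"
  shows "coherence n (range (\<lambda>c. c \<cdot>\<^sub>v u)) = Max ((\<lambda>i. (u $ i)\<^sup>2) ` {..<n})"
proof -
  have "sq_norm_vec (orth_proj (range (\<lambda>c. c \<cdot>\<^sub>v u)) (unit_vec n i)) = (u $ i)\<^sup>2" if "i < n" for i
    using orth_proj_line[OF u unit_vec_carrier] u that by (simp add: sq_norm_vec_def power2_eq_square)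
  then show ?thesis unfolding coherence_def by (intro arg_cong[where f = Max] image_cong) auto
qed

lemma not_realizable_plane_line:
  assumes u: "u \<in> carrier_vec 2" and unbalanced: "(u $ 0)\<^sup>2 \<noteq> (u $ 1)\<^sup>2"
  shows "\<not> realizable 2 (range (\<lambda>c. c \<cdot>\<^sub>v u))"
proof
  assume "realizable 2 (range (\<lambda>c. c \<cdot>\<^sub>v u))"
  then obtain A where corr: "correlation_mat 2 A" and "A *\<^sub>v (1 \<cdot>\<^sub>v u) = 0\<^sub>v 2"
    unfolding realizable_def by blast
  then have Au: "A *\<^sub>v u = 0\<^sub>v 2" using u by simp
  have A: "A \<in> carrier_mat 2 2" "transpose_mat A = A" "A $$ (0,0) = 1" "A $$ (1,1) = 1"
    using corr by (auto simp: correlation_mat_def psd_mat_def)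
  define c where "c = A $$ (0,1)"
  have "A $$ (1,0) = c" using arg_cong[OF A(2), of "\<lambda>M. M $$ (0,1)"] A(1) by (simp add: c_def)
  moreover have row: "A $$ (i,0) * u $ 0 + A $$ (i,1) * u $ 1 = 0" if "i < 2" for i
  proof -
    have "(A *\<^sub>v u) $ i = A $$ (i,0) * u $ 0 + A $$ (i,1) * u $ 1"
      using that A(1) u by (simp add: scalar_prod_eq_sum[of _ 2] row_def numeral_2_eq_2)
    then show ?thesis using Au that by simp
  qed
  ultimately have a: "u $ 0 = - c * u $ 1" and b: "u $ 1 = - c * u $ 0"
    using row[of 0] row[of 1] A(3,4) by (simp_all add: c_def eq_neg_iff_add_eq_0 add.commute)
  then have "(1 - c\<^sup>2) * u $ 0 = 0" "(1 - c\<^sup>2) * u $ 1 = 0"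
    by (simp_all add: power2_eq_square algebra_simps)
  moreover have "u $ 0 \<noteq> 0 \<or> u $ 1 \<noteq> 0" using unbalanced by auto
  ultimately have "c\<^sup>2 = 1" by auto
  then show False using unbalanced a by (simp add: power2_eq_square algebra_simps)
qed

lemma exists_not_realizable_with_coherence:
  fixes \<alpha> :: real assumes \<alpha>: "1/2 < \<alpha>" "\<alpha> \<le> 1"
  shows "\<exists>(n::nat) U. is_subspace n U \<and> coherence n U = \<alpha> \<and> \<not> realizable n U"
proof -
  define u where "u = vec 2 (\<lambda>i. if i = 0 then sqrt \<alpha> else sqrt (1 - \<alpha>))"
  have u: "u \<in> carrier_vec 2" by (simp add: u_def)
  have entries: "(u $ 0)\<^sup>2 = \<alpha>" "(u $ 1)\<^sup>2 = 1 - \<alpha>" using \<alpha> by (simp_all add: u_def)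
  have "u \<bullet> u = 1"
    using entries by (simp add: scalar_prod_eq_sum[OF u u] numeral_2_eq_2 power2_eq_square)
  then have "coherence 2 (range (\<lambda>c. c \<cdot>\<^sub>v u)) = Max {\<alpha>, 1 - \<alpha>}"
    using coherence_line[OF u] entries by (simp add: numeral_2_eq_2 lessThan_Suc insert_commute)
  moreover have "(u $ 0)\<^sup>2 \<noteq> (u $ 1)\<^sup>2" using entries \<alpha> by simp
  ultimately show ?thesis
    using is_subspace_line[OF u] not_realizable_plane_line[OF u] \<alpha> by (intro exI) auto
qed

theorem theorem4p2:
  shows "(\<forall>(n::nat) U. is_subspace n U \<and> coherence n U < 1/2 \<longrightarrow> realizable n U) \<and>
         (\<forall>\<alpha>::real. 1/2 < \<alpha> \<and> \<alpha> \<le> 1 \<longrightarrow>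
            (\<exists>(n::nat) U. is_subspace n U \<and> coherence n U = \<alpha> \<and> \<not> realizable n U))"
  using realizable_if_coherence_lt_half exists_not_realizable_with_coherence by blast

end
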